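(* For every integer $n>0$, if hyperplanes $h_1,\dots,h_k$ in $\mathbb{R}^n$ form a skew cover of $\{\pm1\}^n$, then $k\ge n/2$.
   Context: Hyperplanes $h_i=\{x\in\mathbb{R}^n:\langle v_i,x\rangle=\mu_i\}$, $i\in[k]$, form a skew cover of $\{\pm1\}^n$ if every vertex of $\{\pm1\}^n$ lies in at least one $h_i$ and, for each $i\in[k]$, every coordinate of $v_i$ is non-zero. *)

theory Defs
  imports "HOL-Analysis.Analysis"
begin

definition cube_vertices :: "(real ^ 'n) set" where
  "cube_vertices = {x. \<forall>j. x $ j = 1 \<or> x $ j = -1}"

definition skew_cover :: "nat \<Rightarrow> (nat \<Rightarrow> real ^ 'n) \<Rightarrow> (nat \<Rightarrow> real) \<Rightarrow> bool" where
  "skew_cover k v mu \<longleftrightarrow>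
     (\<forall>x\<in>cube_vertices. \<exists>i<k. v i \<bullet> x = mu i) \<and>
     (\<forall>i<k. \<forall>j. v i $ j \<noteq> 0)"

end

theory Submission
  imports Defs
begin

text \<open>
  The polynomial \<open>P(x) = \<Prod>i<k. (\<langle>v i, x\<rangle> - \<mu> i)\<close> vanishes on the cube, so every alternating
  sum of \<open>P\<close> over the vertices of a \<open>k\<close>-dimensional subface vanishes. Since \<open>P\<close> has degree
  \<open>k\<close>, the alternating sum over a face spanned by the directions \<open>S\<close>, \<open>|S| = k\<close>, equals \<open>2^k\<close>
  times the coefficient \<open>c\<^sub>k(S)\<close> of \<open>\<Prod>j\<in>S. x\<^sub>j\<close> in \<open>\<Prod>i<k. \<langle>v i, x\<rangle>\<close>. These coefficients
  satisfy \<open>c\<^sub>m\<^sub>+\<^sub>1(S) = \<Sum>j\<in>S. v\<^sub>m(j) c\<^sub>m(S - {j})\<close>; after rescaling by \<open>\<Prod>j\<in>S. v\<^sub>m(j)\<close>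
  (all entries are nonzero) this is the up operator \<open>U\<close> of the Boolean lattice, which is
  injective on functions supported on level \<open>m\<close> as long as \<open>2m < n\<close>, because
  \<open>\<parallel>Uf\<parallel>\<^sup>2 = \<parallel>Df\<parallel>\<^sup>2 + \<Sum>T. (n - 2|T|) f(T)\<^sup>2\<close> for the down operator \<open>D\<close>.
  Hence \<open>c\<^sub>k \<noteq> 0\<close> whenever \<open>2k < n\<close>, a contradiction.
\<close>

lemma power2_sum_eq_diag_plus_offdiag:
  fixes g :: "'a \<Rightarrow> 'b::comm_ring_1"
  assumes "finite A"
  shows "(sum g A)^2 = (\<Sum>j\<in>A. (g j)^2) + (\<Sum>j\<in>A. \<Sum>l\<in>A - {j}. g j * g l)"
proof -
  have "(sum g A)^2 = (\<Sum>j\<in>A. \<Sum>l\<in>A. g j * g l)"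
    by (simp add: power2_eq_square sum_product)
  also have "\<dots> = (\<Sum>j\<in>A. (g j)^2 + (\<Sum>l\<in>A - {j}. g j * g l))"
    by (intro sum.cong refl) (simp add: sum.remove[OF assms] power2_eq_square)
  finally show ?thesis
    by (simp add: sum.distrib)
qed

lemma card_Compl_plus_card:
  fixes T :: "'n::finite set"
  shows "card (-T) + card T = CARD('n)"
  using card_Un_disjoint[of "-T" T] by simp

lemma sum_member_pairs_eq_sum_nonmember_pairs:
  fixes g :: "'n::finite set \<Rightarrow> 'n \<Rightarrow> 'b::comm_monoid_add"
  shows "(\<Sum>S\<in>UNIV. \<Sum>j\<in>S. g (S - {j}) j) = (\<Sum>T\<in>UNIV. \<Sum>j\<in>-T. g T j)"
proof -
  have "(\<Sum>S\<in>UNIV. \<Sum>j\<in>S. g (S - {j}) j) = (\<Sum>(S, j)\<in>Sigma UNIV (\<lambda>S. S). g (S - {j}) j)"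
    by (rule sum.Sigma) auto
  also have "\<dots> = (\<Sum>(T, j)\<in>Sigma UNIV (\<lambda>T. -T). g T j)"
    by (rule sum.reindex_bij_witness[where i = "\<lambda>(T, j). (insert j T, j)"
          and j = "\<lambda>(S, j). (S - {j}, j)"]) auto
  also have "\<dots> = (\<Sum>T\<in>UNIV. \<Sum>j\<in>-T. g T j)"
    by (rule sum.Sigma[symmetric]) auto
  finally show ?thesis .
qed

definition up_sum :: "('n::finite set \<Rightarrow> real) \<Rightarrow> 'n set \<Rightarrow> real" where
  "up_sum f S = (\<Sum>j\<in>S. f (S - {j}))"

definition down_sum :: "('n::finite set \<Rightarrow> real) \<Rightarrow> 'n set \<Rightarrow> real" where
  "down_sum f T = (\<Sum>j\<in>-T. f (insert j T))"

lemma sum_up_sum_sq: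
  fixes f :: "'n::finite set \<Rightarrow> real"
  defines "X \<equiv> \<Sum>U\<in>UNIV. \<Sum>l\<in>-U. \<Sum>j\<in>-insert l U. f (insert l U) * f (insert j U)"
  shows "(\<Sum>S\<in>UNIV. (up_sum f S)^2) = (\<Sum>T\<in>UNIV. real (card (-T)) * (f T)^2) + X"
proof -
  have diag: "(\<Sum>S\<in>UNIV. \<Sum>j\<in>S. (f (S - {j}))^2) = (\<Sum>T\<in>UNIV. real (card (-T)) * (f T)^2)"
    using sum_member_pairs_eq_sum_nonmember_pairs[of "\<lambda>T j. (f T)^2"] by simp
  have "(\<Sum>S\<in>UNIV. \<Sum>j\<in>S. \<Sum>l\<in>S - {j}. f (S - {j}) * f (S - {l}))
      = (\<Sum>S\<in>UNIV. \<Sum>j\<in>S. \<Sum>l\<in>S - {j}. f (S - {j}) * f (insert j (S - {j} - {l})))"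
    by (intro sum.cong refl arg_cong2[where f = "(*)"] arg_cong[where f = f]) auto
  also have "\<dots> = (\<Sum>T\<in>UNIV. \<Sum>j\<in>-T. \<Sum>l\<in>T. f T * f (insert j (T - {l})))"
    by (rule sum_member_pairs_eq_sum_nonmember_pairs)
  also have "\<dots> = (\<Sum>T\<in>UNIV. \<Sum>l\<in>T. \<Sum>j\<in>-T. f T * f (insert j (T - {l})))"
    by (intro sum.cong refl sum.swap)
  also have "\<dots> = (\<Sum>T\<in>UNIV. \<Sum>l\<in>T. \<Sum>j\<in>-insert l (T - {l}).
                      f (insert l (T - {l})) * f (insert j (T - {l})))"
    by (intro sum.cong refl) (auto simp: insert_absorb)
  also have "\<dots> = X"
    unfolding X_def by (rule sum_member_pairs_eq_sum_nonmember_pairs)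
  finally have offdiag: "(\<Sum>S\<in>UNIV. \<Sum>j\<in>S. \<Sum>l\<in>S - {j}. f (S - {j}) * f (S - {l})) = X" .
  show ?thesis
    unfolding up_sum_def power2_sum_eq_diag_plus_offdiag[OF finite]
    by (simp add: sum.distrib diag offdiag)
qed

lemma sum_down_sum_sq:
  fixes f :: "'n::finite set \<Rightarrow> real"
  defines "X \<equiv> \<Sum>U\<in>UNIV. \<Sum>l\<in>-U. \<Sum>j\<in>-insert l U. f (insert l U) * f (insert j U)"
  shows "(\<Sum>T\<in>UNIV. (down_sum f T)^2) = (\<Sum>S\<in>UNIV. real (card S) * (f S)^2) + X"
proof -
  have "(\<Sum>T\<in>UNIV. \<Sum>l\<in>-T. (f (insert l T))^2)
      = (\<Sum>S\<in>UNIV. \<Sum>l\<in>S. (f (insert l (S - {l})))^2)"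
    by (rule sum_member_pairs_eq_sum_nonmember_pairs[symmetric])
  also have "\<dots> = (\<Sum>S\<in>UNIV. real (card S) * (f S)^2)"
    by (simp add: insert_absorb)
  finally have diag: "(\<Sum>T\<in>UNIV. \<Sum>l\<in>-T. (f (insert l T))^2) = \<dots>" .
  have "down_sum f T = (\<Sum>l\<in>-T. f (insert l T))" for T
    by (simp add: down_sum_def)
  moreover have "-T - {l} = -insert l T" for T and l :: 'n
    by auto
  ultimately show ?thesis
    unfolding X_def by (simp add: power2_sum_eq_diag_plus_offdiag sum.distrib diag)
qed

lemma sum_up_sum_sq_eq:
  fixes f :: "'n::finite set \<Rightarrow> real"
  shows "(\<Sum>S\<in>UNIV. (up_sum f S)^2)
    = (\<Sum>T\<in>UNIV. (down_sum f T)^2) + (\<Sum>T\<in>UNIV. (real (card (-T)) - real (card T)) * (f T)^2)"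
  by (simp add: sum_up_sum_sq sum_down_sum_sq algebra_simps sum_subtractf)

lemma up_sum_eq_0_imp_eq_0:
  fixes f :: "'n::finite set \<Rightarrow> real"
  assumes level: "\<And>S. card S \<noteq> d \<Longrightarrow> f S = 0"
    and below_half: "2 * d < CARD('n)"
    and up_zero: "\<And>S. up_sum f S = 0"
  shows "f S = 0"
proof -
  have weight_pos: "real (card (-T)) - real (card T) > 0" if "card T = d" for T :: "'n set"
    using card_Compl_plus_card[of T] that below_half by simp
  have nonneg: "0 \<le> (real (card (-T)) - real (card T)) * (f T)^2" for T
    using weight_pos[of T] level[of T] by (cases "card T = d") auto
  have "(\<Sum>T\<in>UNIV. (real (card (-T)) - real (card T)) * (f T)^2)
      = - (\<Sum>T\<in>UNIV. (down_sum f T)^2)"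
    using sum_up_sum_sq_eq[of f] up_zero by simp
  also have "\<dots> \<le> 0"
    by (simp add: sum_nonneg)
  moreover have "0 \<le> (\<Sum>T\<in>UNIV. (real (card (-T)) - real (card T)) * (f T)^2)"
    by (intro sum_nonneg nonneg)
  ultimately have "(\<Sum>T\<in>UNIV. (real (card (-T)) - real (card T)) * (f T)^2) = 0"
    by linarith
  then have "(real (card (-S)) - real (card S)) * (f S)^2 = 0"
    using nonneg by (subst (asm) sum_nonneg_eq_0_iff) auto
  then show "f S = 0"
    using weight_pos[of S] level[of S] by (cases "card S = d") auto
qed

text \<open>\<open>sqfree_coeff v m S\<close> is the coefficient of \<open>\<Prod>j\<in>S. x $ j\<close> in \<open>\<Prod>i<m. v i \<bullet> x\<close>.\<close>

fun sqfree_coeff :: "(nat \<Rightarrow> real ^ 'n::finite) \<Rightarrow> nat \<Rightarrow> 'n set \<Rightarrow> real" where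
  "sqfree_coeff v 0 S = (if S = {} then 1 else 0)"
| "sqfree_coeff v (Suc m) S = (\<Sum>j\<in>S. v m $ j * sqfree_coeff v m (S - {j}))"

lemma sqfree_coeff_eq_0: "card S \<noteq> m \<Longrightarrow> sqfree_coeff v m S = 0"
proof (induction m arbitrary: S)
  case 0
  then show ?case by auto
next
  case (Suc m)
  have "sqfree_coeff v m (S - {j}) = 0" if "j \<in> S" for j
  proof -
    have "card S > 0"
      using that by (auto simp: card_gt_0_iff)
    with Suc.prems that show ?thesis
      by (intro Suc.IH) (auto simp: card_Diff_singleton)
  qed
  then show ?case by simp
qed

lemma sqfree_coeff_Suc_nonzero:
  fixes v :: "nat \<Rightarrow> real ^ 'n::finite"
  assumes nz: "\<And>j. v m $ j \<noteq> 0" and below_half: "2 * m < CARD('n)"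
    and S0: "sqfree_coeff v m S0 \<noteq> 0"
  shows "\<exists>S. sqfree_coeff v (Suc m) S \<noteq> 0"
proof (rule ccontr)
  assume "\<nexists>S. sqfree_coeff v (Suc m) S \<noteq> 0"
  then have zero: "sqfree_coeff v (Suc m) S = 0" for S by auto
  define f where "f S = sqfree_coeff v m S / (\<Prod>j\<in>S. v m $ j)" for S
  have prod_nz: "(\<Prod>j\<in>S. v m $ j) \<noteq> 0" for S
    using nz by simp
  have up_sum_f: "up_sum f S = sqfree_coeff v (Suc m) S / (\<Prod>j\<in>S. v m $ j)" for S
  proof -
    have "f (S - {j}) = v m $ j * sqfree_coeff v m (S - {j}) / (\<Prod>j\<in>S. v m $ j)" if "j \<in> S" for j
      using that nz[of j] by (simp add: f_def prod.remove)
    then show ?thesis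
      by (simp add: up_sum_def sum_divide_distrib)
  qed
  have "up_sum f S = 0" for S
    unfolding up_sum_f zero by simp
  moreover have "card S \<noteq> m \<Longrightarrow> f S = 0" for S
    by (simp add: f_def sqfree_coeff_eq_0)
  ultimately have "f S0 = 0"
    using up_sum_eq_0_imp_eq_0[of m f] below_half by blast
  then show False
    using S0 prod_nz[of S0] by (simp add: f_def)
qed

lemma sqfree_coeff_nonzero:
  fixes v :: "nat \<Rightarrow> real ^ 'n::finite"
  assumes "\<And>i j. i < m \<Longrightarrow> v i $ j \<noteq> 0" and "2 * m \<le> CARD('n) + 1"
  shows "\<exists>S. sqfree_coeff v m S \<noteq> 0"
  using assms
proof (induction m)
  case 0
  show ?case by (rule exI[of _ "{}"]) simp
next
  case (Suc m)
  then obtain S where "sqfree_coeff v m S \<noteq> 0" by auto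
  with Suc.prems show ?case
    by (intro sqfree_coeff_Suc_nonzero) auto
qed

definition subcube_vertex :: "'n::finite set \<Rightarrow> 'n set \<Rightarrow> real ^ 'n \<Rightarrow> real ^ 'n" where
  "subcube_vertex J A x = (\<chi> i. if i \<in> A then 1 else if i \<in> J then -1 else x $ i)"

definition vec_upd :: "real ^ 'n::finite \<Rightarrow> 'n \<Rightarrow> real \<Rightarrow> real ^ 'n" where
  "vec_upd x j c = (\<chi> i. if i = j then c else x $ i)"

definition cube_diff :: "'n::finite set \<Rightarrow> (real ^ 'n \<Rightarrow> real) \<Rightarrow> real ^ 'n \<Rightarrow> real" where
  "cube_diff J F x = (\<Sum>A\<in>Pow J. (-1) ^ card (J - A) * F (subcube_vertex J A x))"

lemma sum_Pow_remove:
  fixes G :: "'a set \<Rightarrow> 'b::comm_monoid_add"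
  assumes "finite J" "j \<in> J"
  shows "sum G (Pow J) = (\<Sum>A\<in>Pow (J - {j}). G (insert j A)) + (\<Sum>A\<in>Pow (J - {j}). G A)"
proof -
  have Pow_J: "Pow J = insert j ` Pow (J - {j}) \<union> Pow (J - {j})"
    using assms Pow_insert[of j "J - {j}"] by (auto simp: insert_absorb)
  have "inj_on (insert j) (Pow (J - {j}))"
    by (rule inj_onI) (metis Diff_insert_absorb Pow_iff insert_Diff_single subset_Diff_insert)
  moreover have "insert j ` Pow (J - {j}) \<inter> Pow (J - {j}) = {}"
    by auto
  ultimately show ?thesis
    unfolding Pow_J using assms(1) by (subst sum.union_disjoint) (auto simp: sum.reindex)
qed

lemma subcube_vertex_insert:
  "j \<in> J \<Longrightarrow> A \<subseteq> J - {j} \<Longrightarrow>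
    subcube_vertex J (insert j A) x = subcube_vertex (J - {j}) A (vec_upd x j 1)"
  by (auto simp: subcube_vertex_def vec_upd_def vec_eq_iff)

lemma subcube_vertex_remove:
  "j \<in> J \<Longrightarrow> A \<subseteq> J - {j} \<Longrightarrow>
    subcube_vertex J A x = subcube_vertex (J - {j}) A (vec_upd x j (-1))"
  by (auto simp: subcube_vertex_def vec_upd_def vec_eq_iff)

lemma card_Diff_insert_eq:
  "j \<in> J \<Longrightarrow> A \<subseteq> J - {j} \<Longrightarrow> card (J - insert j A) = card (J - {j} - A)"
  by (rule arg_cong[where f = card]) auto

lemma card_Diff_eq_Suc_card_Diff_remove:
  fixes J :: "'a set"
  assumes "finite J" "j \<in> J" "A \<subseteq> J - {j}"
  shows "card (J - A) = Suc (card (J - {j} - A))"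
proof -
  have "J - A = insert j (J - {j} - A)"
    using assms by auto
  then show ?thesis
    using assms by simp
qed

lemma cube_diff_remove:
  fixes J :: "'n::finite set"
  assumes "j \<in> J"
  shows "cube_diff J F x = cube_diff (J - {j}) F (vec_upd x j 1) - cube_diff (J - {j}) F (vec_upd x j (-1))"
  using assms
  by (simp add: cube_diff_def sum_Pow_remove subcube_vertex_insert subcube_vertex_remove
      card_Diff_insert_eq card_Diff_eq_Suc_card_Diff_remove sum_negf)

lemma cube_diff_signed_remove:
  fixes J :: "'n::finite set"
  assumes j: "j \<in> J"
  shows "(\<Sum>A\<in>Pow J. (-1) ^ card (J - A) * F (subcube_vertex J A x) * (if j \<in> A then 1 else -1))
     = cube_diff (J - {j}) F (vec_upd x j 1) + cube_diff (J - {j}) F (vec_upd x j (-1))"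
proof -
  have "j \<notin> A" if "A \<in> Pow (J - {j})" for A
    using that by auto
  then show ?thesis
    using j by (simp add: cube_diff_def sum_Pow_remove subcube_vertex_insert subcube_vertex_remove
        card_Diff_insert_eq card_Diff_eq_Suc_card_Diff_remove)
qed

lemma cube_diff_const: "cube_diff J (\<lambda>_. c) x = (if J = {} then c else 0)"
proof (cases "J = {}")
  case True
  then show ?thesis by (simp add: cube_diff_def)
next
  case False
  then obtain j where "j \<in> J" by auto
  with False show ?thesis
    by (simp add: cube_diff_remove) (simp add: cube_diff_def)
qed

lemma cube_diff_eq_0:
  assumes "\<And>y. y \<in> cube_vertices \<Longrightarrow> F y = 0" and "x \<in> cube_vertices"
  shows "cube_diff J F x = 0"
proof -
  have "subcube_vertex J A x \<in> cube_vertices" for A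
    using assms(2) by (simp add: cube_vertices_def subcube_vertex_def)
  then show ?thesis
    by (simp add: cube_diff_def assms(1))
qed

lemma inner_subcube_vertex:
  fixes J :: "'n::finite set" and w :: "real ^ 'n"
  assumes "A \<subseteq> J"
  shows "w \<bullet> subcube_vertex J A x
    = (\<Sum>i\<in>J. w $ i * (if i \<in> A then 1 else -1)) + (\<Sum>i\<in>-J. w $ i * x $ i)"
proof -
  have "w \<bullet> subcube_vertex J A x = (\<Sum>i\<in>J \<union> -J. w $ i * subcube_vertex J A x $ i)"
    by (simp add: inner_vec_def)
  also have "\<dots> = (\<Sum>i\<in>J. w $ i * subcube_vertex J A x $ i) + (\<Sum>i\<in>-J. w $ i * subcube_vertex J A x $ i)"
    by (rule sum.union_disjoint) auto
  also have "\<dots> = (\<Sum>i\<in>J. w $ i * (if i \<in> A then 1 else -1)) + (\<Sum>i\<in>-J. w $ i * x $ i)"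
    using assms by (intro arg_cong2[where f = "(+)"] sum.cong) (auto simp: subcube_vertex_def)
  finally show ?thesis .
qed

definition cover_poly :: "(nat \<Rightarrow> real ^ 'n) \<Rightarrow> (nat \<Rightarrow> real) \<Rightarrow> nat \<Rightarrow> real ^ 'n \<Rightarrow> real" where
  "cover_poly v mu m x = (\<Prod>i<m. v i \<bullet> x - mu i)"

lemma cube_diff_cover_poly:
  fixes v :: "nat \<Rightarrow> real ^ 'n::finite"
  assumes "m \<le> card J"
  shows "cube_diff J (cover_poly v mu m) x = 2 ^ card J * sqfree_coeff v m J"
  using assms
proof (induction m arbitrary: J x)
  case 0
  have "cover_poly v mu 0 = (\<lambda>_. 1)"
    by (simp add: cover_poly_def fun_eq_iff)
  then show ?case
    by (simp add: cube_diff_const)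
next
  case (Suc m)
  define B where "B = (\<Sum>i\<in>-J. v m $ i * x $ i) - mu m"
  define s where "s A = (-1::real) ^ card (J - A) * cover_poly v mu m (subcube_vertex J A x)" for A
  define W where "W i = (\<Sum>A\<in>Pow J. s A * (if i \<in> A then 1 else -1))" for i
  have "cube_diff J (cover_poly v mu (Suc m)) x
      = (\<Sum>A\<in>Pow J. s A * ((\<Sum>i\<in>J. v m $ i * (if i \<in> A then 1 else -1)) + B))"
    unfolding cube_diff_def s_def B_def
    by (intro sum.cong refl) (simp add: cover_poly_def inner_subcube_vertex)
  also have "\<dots> = B * cube_diff J (cover_poly v mu m) x + (\<Sum>i\<in>J. v m $ i * W i)"
    unfolding cube_diff_def W_def s_def
    by (simp add: algebra_simps sum.distrib sum_distrib_left sum_distrib_right sum.swap[of _ J])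
  also have "cube_diff J (cover_poly v mu m) x = 0"
    using Suc.IH[of J x] Suc.prems sqfree_coeff_eq_0[of J m v] by simp
  also have "W i = 2 ^ card J * sqfree_coeff v m (J - {i})" if i: "i \<in> J" for i
  proof -
    have "W i = cube_diff (J - {i}) (cover_poly v mu m) (vec_upd x i 1)
        + cube_diff (J - {i}) (cover_poly v mu m) (vec_upd x i (-1))"
      unfolding W_def s_def by (rule cube_diff_signed_remove[OF i])
    moreover have "card J = Suc (card (J - {i}))"
      using i by (simp add: card_Suc_Diff1 del: card_Diff_insert)
    ultimately show ?thesis
      using Suc.IH[of "J - {i}"] Suc.prems by simp
  qed
  then have "(\<Sum>i\<in>J. v m $ i * W i) = 2 ^ card J * (\<Sum>i\<in>J. v m $ i * sqfree_coeff v m (J - {i}))"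
    by (simp add: sum_distrib_left algebra_simps)
  finally show ?case
    by simp
qed

lemma cover_poly_vanishes_on_cube:
  assumes "skew_cover k v mu" "x \<in> cube_vertices"
  shows "cover_poly v mu k x = 0"
  using assms by (auto simp: skew_cover_def cover_poly_def)

theorem mainTheorem2:
  fixes v :: "nat \<Rightarrow> real ^ 'n" and mu :: "nat \<Rightarrow> real" and k :: nat
  assumes "skew_cover k v mu"
  shows "real k \<ge> real CARD('n) / 2"
proof (rule ccontr)
  assume "\<not> ?thesis"
  then have below_half: "2 * k < CARD('n)"
    by linarith
  obtain S where S: "sqfree_coeff v k S \<noteq> 0"
    using sqfree_coeff_nonzero[of k v] below_half assms by (auto simp: skew_cover_def)
  then have "card S = k"
    using sqfree_coeff_eq_0 by blast
  define ones :: "real ^ 'n" where "ones = (\<chi> i. 1)"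
  have "ones \<in> cube_vertices"
    by (simp add: ones_def cube_vertices_def)
  then have "cube_diff S (cover_poly v mu k) ones = 0"
    using cover_poly_vanishes_on_cube[OF assms] by (intro cube_diff_eq_0)
  moreover have "cube_diff S (cover_poly v mu k) ones = 2 ^ k * sqfree_coeff v k S"
    using cube_diff_cover_poly[of k S v mu ones] \<open>card S = k\<close> by simp
  ultimately show False
    using S by simp
qed

end
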